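(* Let $F$ be a sensori-computational device and $N\subseteq Y(F)$, and suppose every nonempty string $s_1s_2\cdots s_k\in\mathcal{L}(F)$ has $s_1\in Y(F)\setminus N$. If there exists a sensori-computational device that output simulates $F$ modulo the $N$-pump $P_N$ (with $L=\mathcal{L}(F)$, $\Sigma=Y(F)$), then there exists a sensori-computational device that output simulates $F$ modulo the $N$-shrink $\pi_N$ (with $L=\mathcal{L}(F)$, $\Sigma=Y(F)$).
   Context: A sensori-computational device is a 6-tuple $F=(V,V_0,Y,\tau,C,c)$ where $V$ is a non-empty finite set of states, $V_0\subseteq V$ a non-empty set of initial states, $Y=Y(F)$ a finite set of observations, $\tau:V\times V\to\mathcal{P}(Y)$, $C$ a set of outputs, $c:V\to\mathcal{P}(C)\setminus\{\emptyset\}$. A string $y_1\cdots y_n$ reaches $w$ from $v$ if there are states $w_0=v,\dots,w_n=w$ with $y_i\in\tau(w_{i-1},w_i)$; $\mathcal{R}_F(s)$ is the set of states reached by $s$ from some initial state; $\mathcal{L}(F)=\{s\in Y^*:\mathcal{R}_F(s)\ne\emptyset\}$; $\mathcal{C}_F(s)=\bigcup_{v\in\mathcal{R}_F(s)}c(v)$. For a relation $R\subseteq A\times B$ between sets of strings, $F'$ output simulates $F$ modulo $R$ if for every $s\in\mathcal{L}(F)$: (1) some $t\in\mathcal{L}(F')$ has $s\,R\,t$; (2) every $t\in B$ with $s\,R\,t$ satisfies $t\in\mathcal{L}(F')$ and $\mathcal{C}_F(s)\supseteq\mathcal{C}_{F'}(t)$. For a set $\Sigma$, $L\subseteq\Sigma^*$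 and $N\subseteq\Sigma$: the $N$-shrink is the function $\pi_N:L\to(\Sigma\setminus N)^*$ deleting every occurrence of symbols of $N$ from a string (so $\pi_N(\epsilon)=\epsilon$). The $N$-pump is the relation $P_N\subseteq L\times\Sigma^*$ defined as the smallest relation such that $\epsilon\,P_N\,\epsilon$, $s\,P_N\,s$ for every $s\in L$, and whenever $s\,P_N\,t_1\cdots t_\ell$, then $s\,P_N\,t_1\cdots t_k\,b\,t_{k+1}\cdots t_\ell$ for every $b\in N$ and $k\in\{1,\dots,\ell\}$. *)

theory Defs
  imports Main
begin

text \<open>A sensori-computational device F = (V, V0, Y, tau, C, c).
  States of type 'v, observations of type 'y, outputs of type 'c.\<close>

record ('v, 'y, 'c) scd =
  states :: "'v set"
  init   :: "'v set"
  obs    :: "'y set"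
  trans  :: "'v \<Rightarrow> 'v \<Rightarrow> 'y set"
  outs   :: "'c set"
  out    :: "'v \<Rightarrow> 'c set"

definition is_scd :: "('v, 'y, 'c) scd \<Rightarrow> bool" where
  "is_scd F \<longleftrightarrow> finite (states F) \<and> states F \<noteq> {}
     \<and> init F \<subseteq> states F \<and> init F \<noteq> {}
     \<and> finite (obs F)
     \<and> (\<forall>v\<in>states F. \<forall>w\<in>states F. trans F v w \<subseteq> obs F)
     \<and> (\<forall>v\<in>states F. out F v \<subseteq> outs F \<and> out F v \<noteq> {})"

fun reaches :: "('v, 'y, 'c) scd \<Rightarrow> 'v \<Rightarrow> 'y list \<Rightarrow> 'v \<Rightarrow> bool" where
  "reaches F v [] w \<longleftrightarrow> v = w"
| "reaches F v (y # s) w \<longleftrightarrow> (\<exists>u\<in>states F. y \<in> trans F v u \<and> reaches F u s w)"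

definition reached :: "('v, 'y, 'c) scd \<Rightarrow> 'y list \<Rightarrow> 'v set" where
  "reached F s = {w. \<exists>v\<in>init F. reaches F v s w}"

definition lang :: "('v, 'y, 'c) scd \<Rightarrow> 'y list set" where
  "lang F = {s. reached F s \<noteq> {}}"

definition outputs :: "('v, 'y, 'c) scd \<Rightarrow> 'y list \<Rightarrow> 'c set" where
  "outputs F s = (\<Union>v\<in>reached F s. out F v)"

definition output_simulates ::
  "('w, 'y, 'c) scd \<Rightarrow> ('v, 'y, 'c) scd \<Rightarrow> ('y list \<Rightarrow> 'y list \<Rightarrow> bool) \<Rightarrow> bool" where
  "output_simulates F' F R \<longleftrightarrow>
     (\<forall>s\<in>lang F. (\<exists>t\<in>lang F'. R s t)
        \<and> (\<forall>t. R s t \<longrightarrow> t \<in> lang F' \<and> outputs F' t \<subseteq> outputs F s))"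

definition shrink :: "'y set \<Rightarrow> 'y list \<Rightarrow> 'y list" where
  "shrink N s = filter (\<lambda>y. y \<notin> N) s"

definition shrink_rel :: "'y list set \<Rightarrow> 'y set \<Rightarrow> 'y list \<Rightarrow> 'y list \<Rightarrow> bool" where
  "shrink_rel L N s t \<longleftrightarrow> s \<in> L \<and> t = shrink N s"

inductive pump :: "'y list set \<Rightarrow> 'y set \<Rightarrow> 'y list \<Rightarrow> 'y list \<Rightarrow> bool"
  for L :: "'y list set" and N :: "'y set" where
  pump_eps: "pump L N [] []"
| pump_refl: "s \<in> L \<Longrightarrow> pump L N s s"
| pump_ins: "pump L N s t \<Longrightarrow> b \<in> N \<Longrightarrow> 1 \<le> k \<Longrightarrow> k \<le> length t
     \<Longrightarrow> pump L N s (take k t @ b # drop k t)"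

end

theory Submission
  imports Defs
begin

(* The new device reads the shrunk string t and keeps, as its state, the family of
   all sets of states that F can occupy after some string s with shrink N s = t; each symbol
   outside N updates this family deterministically.  It outputs the consensus of F on t, i.e.
   the intersection of the outputs of all strings of lang F that shrink to t.  The consensus is
   nonempty: finitely many such strings already realise all of these reached sets; they all
   begin with the first symbol of t (no string of lang F starts with a symbol of N), so they
   have a common N-pump w, and the outputs of F1 after w lie in the outputs of each of them. *)

inductive padded :: "'y set \<Rightarrow> 'y list \<Rightarrow> 'y list \<Rightarrow> bool" for N :: "'y set" where
  padded_Nil: "padded N [] []"
| padded_Cons: "padded N s w \<Longrightarrow> padded N (a # s) (a # w)"
| padded_insert: "padded N s w \<Longrightarrow> b \<in> N \<Longrightarrow> padded N s (b # w)"

lemma padded_refl: "padded N s s"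
  by (induction s) (auto intro: padded.intros)

lemma shrink_padded: "padded N s w \<Longrightarrow> shrink N w = shrink N s"
  by (induction rule: padded.induct) (auto simp: shrink_def)

lemma padded_trans: "padded N w z \<Longrightarrow> padded N s w \<Longrightarrow> padded N s z"
proof (induction w z arbitrary: s rule: padded.induct)
  case padded_Nil
  then show ?case .
next
  case (padded_Cons w z a)
  from padded_Cons.prems show ?case
    by cases (auto intro: padded.intros padded_Cons.IH)
next
  case (padded_insert w z b)
  then show ?case by (auto intro: padded.intros)
qed

lemma padded_common:
  "shrink N s1 = shrink N s2 \<Longrightarrow> \<exists>w. padded N s1 w \<and> padded N s2 w"
proof (induction "length s1 + length s2" arbitrary: s1 s2 rule: less_induct)
  case less
  consider (pad1) b r where "s1 = b # r" "b \<in> N"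
    | (pad2) b r where "s2 = b # r" "b \<in> N"
    | (Nil) "s1 = []" "s2 = []"
    | (Cons) a r1 r2 where "s1 = a # r1" "s2 = a # r2" "shrink N r1 = shrink N r2"
    using less.prems by (cases s1; cases s2) (auto simp: shrink_def split: if_splits)
  then show ?case
  proof cases
    case pad1
    with less obtain w where "padded N r w" "padded N s2 w" by (auto simp: shrink_def)
    with pad1 show ?thesis by (auto intro: padded.intros)
  next
    case pad2
    with less obtain w where "padded N s1 w" "padded N r w" by (auto simp: shrink_def)
    with pad2 show ?thesis by (auto intro: padded.intros)
  next
    case Nil
    then show ?thesis by (auto intro: padded.intros)
  next
    case Cons
    with less.hyps[of r1 r2] obtain w where "padded N r1 w" "padded N r2 w" by auto
    with Cons show ?thesis by (auto intro: padded.intros)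
  qed
qed

lemma padded_common_finite:
  assumes "finite S" "S \<noteq> {}" "\<forall>s\<in>S. shrink N s = t"
  shows "\<exists>w. shrink N w = t \<and> (\<forall>s\<in>S. padded N s w)"
  using assms
proof (induction rule: finite_ne_induct)
  case (singleton s)
  then show ?case by (auto intro: padded_refl)
next
  case (insert s S)
  then obtain w where w: "shrink N w = t" "\<forall>s\<in>S. padded N s w" by auto
  with insert.prems obtain z where "padded N w z" "padded N s z"
    using padded_common[of N w s] by auto
  with w show ?case by (metis insert_iff padded_trans shrink_padded)
qed

lemma pump_padded_suffix:
  "padded N s' w' \<Longrightarrow> pump L N s (a # x @ s') \<Longrightarrow> pump L N s (a # x @ w')"
proof (induction s' w' arbitrary: x rule: padded.induct)
  case padded_Nil
  then show ?case .
next
  case (padded_Cons s' w' c)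
  then show ?case by (metis append.assoc append_Cons append_Nil)
next
  case (padded_insert s' w' b)
  then have "pump L N s (a # x @ w')" by blast
  from pump_ins[OF this \<open>b \<in> N\<close>, of "Suc (length x)"] show ?case by simp
qed

lemma pump_Cons_padded: "a # s \<in> L \<Longrightarrow> padded N s w \<Longrightarrow> pump L N (a # s) (a # w)"
  using pump_padded_suffix[where x = "[]"] pump_refl by fastforce

lemma ex_common_pump:
  assumes "finite S" "S \<subseteq> L" "\<forall>s\<in>S. shrink N s = t"
    and hd_notin: "\<forall>s\<in>L. s \<noteq> [] \<longrightarrow> hd s \<notin> N"
  shows "\<exists>w. \<forall>s\<in>S. pump L N s w"
proof (cases t)
  case Nil
  have "s = []" if "s \<in> S" for s
    using that assms(2,3) hd_notin Nil by (cases s) (fastforce simp: shrink_def)+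
  then show ?thesis by (auto intro: pump_eps)
next
  case (Cons a t')
  \<comment> \<open>A pump never inserts in front of the first symbol, so all of S must start with a.\<close>
  have S_Cons: "s = a # tl s \<and> shrink N (tl s) = t'" if "s \<in> S" for s
  proof -
    have s: "s \<in> L" "shrink N s = a # t'" using that assms(2,3) Cons by auto
    then have "s \<noteq> []" by (auto simp: shrink_def)
    with s hd_notin show ?thesis by (cases s) (auto simp: shrink_def)
  qed
  show ?thesis
  proof (cases "S = {}")
    case False
    then obtain w where "\<forall>r\<in>tl ` S. padded N r w"
      using padded_common_finite[of "tl ` S" N t'] assms(1) S_Cons by auto
    then have "pump L N s (a # w)" if "s \<in> S" for s
      using pump_Cons_padded[of a "tl s" L N w] S_Cons[OF that] that assms(2) by auto
    then show ?thesis by blast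
  qed simp
qed

lemma reaches_append: "reaches F v (s @ s') w \<longleftrightarrow> (\<exists>u. reaches F v s u \<and> reaches F u s' w)"
  by (induction s arbitrary: v) auto

lemma reaches_states: "reaches F v s w \<Longrightarrow> v \<in> states F \<Longrightarrow> w \<in> states F"
  by (induction s arbitrary: v) auto

lemma reaches_obs: "is_scd F \<Longrightarrow> reaches F v s w \<Longrightarrow> v \<in> states F \<Longrightarrow> set s \<subseteq> obs F"
  by (induction s arbitrary: v) (auto simp: is_scd_def, blast)

lemma reached_subset_states: "is_scd F \<Longrightarrow> reached F s \<subseteq> states F"
  unfolding reached_def is_scd_def using reaches_states by fast

lemma lang_obs: "is_scd F \<Longrightarrow> s \<in> lang F \<Longrightarrow> set s \<subseteq> obs F"
  unfolding lang_def reached_def using reaches_obs[of F] by (auto simp: is_scd_def)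

lemma outputs_subset_outs: "is_scd F \<Longrightarrow> outputs F s \<subseteq> outs F"
  using reached_subset_states[of F s] unfolding outputs_def is_scd_def by blast

lemma outputs_nonempty: "is_scd F \<Longrightarrow> s \<in> lang F \<Longrightarrow> outputs F s \<noteq> {}"
  using reached_subset_states[of F s] unfolding outputs_def lang_def is_scd_def by blast

definition reached_from :: "('v, 'y, 'c) scd \<Rightarrow> 'v set \<Rightarrow> 'y list \<Rightarrow> 'v set" where
  "reached_from F A s = {w. \<exists>v\<in>A. reaches F v s w}"

lemma reached_append: "reached F (s @ s') = reached_from F (reached F s) s'"
  unfolding reached_def reached_from_def reaches_append by blast

definition relabel :: "('a \<Rightarrow> 'v) \<Rightarrow> 'a set \<Rightarrow> ('v, 'y, 'c) scd \<Rightarrow> ('a, 'y, 'c) scd" where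
  "relabel f S G =
    \<lparr>states = S, init = {i \<in> S. f i \<in> init G}, obs = obs G,
     trans = (\<lambda>i j. scd.trans G (f i) (f j)), outs = outs G, out = (\<lambda>i. out G (f i))\<rparr>"

lemma relabel_simps [simp]:
  "states (relabel f S G) = S" "init (relabel f S G) = {i \<in> S. f i \<in> init G}"
  "obs (relabel f S G) = obs G" "scd.trans (relabel f S G) i j = scd.trans G (f i) (f j)"
  "outs (relabel f S G) = outs G" "out (relabel f S G) i = out G (f i)"
  by (simp_all add: relabel_def)

lemma reaches_relabel:
  assumes inj: "inj_on f S" and onto: "f ` S = states G" and "i \<in> S"
  shows "reaches (relabel f S G) i s j \<longleftrightarrow> j \<in> S \<and> reaches G (f i) s (f j)"
  using assms(3)
proof (induction s arbitrary: i)
  case Nil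
  then show ?case using inj by (auto simp: inj_on_def)
next
  case (Cons y s)
  then have "reaches (relabel f S G) i (y # s) j \<longleftrightarrow>
      (\<exists>k\<in>S. y \<in> scd.trans G (f i) (f k) \<and> j \<in> S \<and> reaches G (f k) s (f j))"
    by auto
  also have "\<dots> \<longleftrightarrow> j \<in> S \<and> (\<exists>u\<in>f ` S. y \<in> scd.trans G (f i) u \<and> reaches G u s (f j))"
    by auto
  finally show ?case by (simp add: onto)
qed

lemma reached_relabel:
  assumes "is_scd G" and inj: "inj_on f S" and onto: "f ` S = states G"
  shows "reached G s = f ` reached (relabel f S G) s"
proof
  show "reached G s \<subseteq> f ` reached (relabel f S G) s"
  proof
    fix w assume "w \<in> reached G s"
    then obtain v where v: "v \<in> init G" "reaches G v s w" unfolding reached_def by blast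
    then have "v \<in> states G" using assms(1) by (auto simp: is_scd_def)
    with v(2) have "v \<in> f ` S" "w \<in> f ` S" using reaches_states onto by auto
    then obtain i j where "i \<in> S" "v = f i" "j \<in> S" "w = f j" by blast
    with v reaches_relabel[OF inj onto] show "w \<in> f ` reached (relabel f S G) s"
      unfolding reached_def by auto
  qed
next
  show "f ` reached (relabel f S G) s \<subseteq> reached G s"
    using reaches_relabel[OF inj onto] unfolding reached_def by auto
qed

lemma is_scd_relabel:
  assumes "is_scd G" "inj_on f S" "f ` S = states G"
  shows "is_scd (relabel f S G)"
proof -
  from assms(1) have G: "finite (states G)" "init G \<subseteq> states G" "init G \<noteq> {}"
    "finite (obs G)" "\<forall>v\<in>states G. \<forall>w\<in>states G. scd.trans G v w \<subseteq> obs G"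
    "\<forall>v\<in>states G. out G v \<subseteq> outs G \<and> out G v \<noteq> {}"
    unfolding is_scd_def by auto
  have "finite S" using finite_image_iff[OF assms(2)] G(1) assms(3) by simp
  moreover have "{i \<in> S. f i \<in> init G} \<noteq> {}" using G(2,3) unfolding assms(3)[symmetric] by auto
  moreover have "f i \<in> states G" if "i \<in> S" for i using that assms(3) by auto
  ultimately show ?thesis using G(4-6) unfolding is_scd_def by auto
qed

lemma output_simulates_nat_states:
  assumes "is_scd G" "output_simulates G F R"
  shows "\<exists>G' :: (nat, 'y, 'c) scd. is_scd G' \<and> output_simulates G' F R"
proof -
  have "finite (states G)" using assms(1) by (simp add: is_scd_def)
  then obtain f where "bij_betw f {0..<card (states G)} (states G)"
    using ex_bij_betw_nat_finite by blast
  then have f: "inj_on f {0..<card (states G)}" "f ` {0..<card (states G)} = states G"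
    by (auto simp: bij_betw_def)
  let ?G' = "relabel f {0..<card (states G)} G"
  have "lang ?G' = lang G" "outputs ?G' = outputs G"
    unfolding lang_def outputs_def fun_eq_iff reached_relabel[OF assms(1) f] by auto
  with assms(2) have "output_simulates ?G' F R"
    unfolding output_simulates_def by simp
  with is_scd_relabel[OF assms(1) f] show ?thesis by blast
qed

lemma shrink_eq_snoc_iff:
  assumes "y \<notin> N"
  shows "shrink N s = t @ [y] \<longleftrightarrow> (\<exists>s1 u. s = s1 @ y # u \<and> shrink N s1 = t \<and> set u \<subseteq> N)"
proof
  assume "shrink N s = t @ [y]"
  then have "filter (\<lambda>y. y \<notin> N) (rev s) = y # rev t"
    by (simp add: shrink_def flip: rev_filter)
  then obtain us vs where "rev s = us @ y # vs" "\<forall>u\<in>set us. u \<in> N"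
      "rev t = filter (\<lambda>y. y \<notin> N) vs"
    by (auto simp: filter_eq_Cons_iff)
  then show "\<exists>s1 u. s = s1 @ y # u \<and> shrink N s1 = t \<and> set u \<subseteq> N"
    by (intro exI[of _ "rev vs"] exI[of _ "rev us"])
      (auto simp: shrink_def rev_filter[symmetric] rev_swap)
next
  assume "\<exists>s1 u. s = s1 @ y # u \<and> shrink N s1 = t \<and> set u \<subseteq> N"
  with assms show "shrink N s = t @ [y]"
    by (auto simp: shrink_def filter_empty_conv)
qed

definition reach_family :: "('v, 'y, 'c) scd \<Rightarrow> 'y set \<Rightarrow> 'y list \<Rightarrow> 'v set set" where
  "reach_family F N t = {reached F s | s. shrink N s = t}"

definition family_step :: "('v, 'y, 'c) scd \<Rightarrow> 'y set \<Rightarrow> 'v set set \<Rightarrow> 'y \<Rightarrow> 'v set set" where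
  "family_step F N AA y = {reached_from F A (y # u) | A u. A \<in> AA \<and> set u \<subseteq> N}"

lemma reach_family_snoc:
  assumes "y \<notin> N"
  shows "reach_family F N (t @ [y]) = family_step F N (reach_family F N t) y"
proof -
  have "reach_family F N (t @ [y]) = {reached F (s @ y # u) | s u. shrink N s = t \<and> set u \<subseteq> N}"
    unfolding reach_family_def shrink_eq_snoc_iff[OF assms] by blast
  also have "\<dots> = family_step F N (reach_family F N t) y"
    unfolding family_step_def reach_family_def reached_append by blast
  finally show ?thesis .
qed

lemma reach_family_Pow: "is_scd F \<Longrightarrow> reach_family F N t \<in> Pow (Pow (states F))"
  unfolding reach_family_def using reached_subset_states by blast

definition consensus :: "('v, 'y, 'c) scd \<Rightarrow> 'v set set \<Rightarrow> 'c set" where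
  "consensus F AA = (\<Inter>A\<in>AA - {{}}. \<Union>v\<in>A. out F v)"

lemma consensus_reach_family:
  "consensus F (reach_family F N t) = (\<Inter>s\<in>{s \<in> lang F. shrink N s = t}. outputs F s)"
  unfolding consensus_def reach_family_def lang_def outputs_def by auto

(* The consensus of a family without nonempty members is UNIV; the fallback outs F keeps the
   device well-formed on such (and all other unusable) families. *)
definition shrink_device :: "('v, 'y, 'c) scd \<Rightarrow> 'y set \<Rightarrow> ('v set set, 'y, 'c) scd" where
  "shrink_device F N =
    \<lparr>states = Pow (Pow (states F)), init = {reach_family F N []}, obs = obs F,
     trans = (\<lambda>AA BB. {y \<in> obs F - N. BB = family_step F N AA y}), outs = outs F,
     out = (\<lambda>AA. if consensus F AA \<noteq> {} \<and> consensus F AA \<subseteq> outs F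
                 then consensus F AA else outs F)\<rparr>"

lemma is_scd_shrink_device:
  assumes "is_scd F" shows "is_scd (shrink_device F N)"
proof -
  have "outs F \<noteq> {}" using assms unfolding is_scd_def by blast
  then show ?thesis
    using assms reach_family_Pow[OF assms] unfolding is_scd_def shrink_device_def by auto
qed

lemma reached_shrink_device:
  assumes "is_scd F" "set t \<subseteq> obs F - N"
  shows "reached (shrink_device F N) t = {reach_family F N t}"
  using assms(2)
proof (induction t rule: rev_induct)
  case Nil
  then show ?case by (simp add: reached_def shrink_device_def)
next
  case (snoc y t)
  then have IH: "reached (shrink_device F N) t = {reach_family F N t}" and y: "y \<in> obs F" "y \<notin> N"
    by auto
  have "reached (shrink_device F N) (t @ [y]) = reached_from (shrink_device F N) {reach_family F N t} [y]"
    by (simp add: reached_append IH)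
  also have "\<dots> = {reach_family F N (t @ [y])}"
    using y reach_family_snoc[OF y(2)] reach_family_Pow[OF assms(1), of N "t @ [y]"]
    by (auto simp: reached_from_def shrink_device_def)
  finally show ?case .
qed

lemma output_simulates_shrink_rel_iff:
  "output_simulates G F (shrink_rel (lang F) N) \<longleftrightarrow>
    (\<forall>s\<in>lang F. shrink N s \<in> lang G \<and> outputs G (shrink N s) \<subseteq> outputs F s)"
  unfolding output_simulates_def shrink_rel_def by auto

lemma shrink_device_simulates:
  assumes "is_scd F"
    and consensus_nonempty: "\<And>s. s \<in> lang F \<Longrightarrow>
      (\<Inter>s'\<in>{s' \<in> lang F. shrink N s' = shrink N s}. outputs F s') \<noteq> {}"
  shows "output_simulates (shrink_device F N) F (shrink_rel (lang F) N)"
  unfolding output_simulates_shrink_rel_iff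
proof (intro ballI)
  fix s assume s: "s \<in> lang F"
  let ?t = "shrink N s" and ?D = "shrink_device F N"
  have "set ?t \<subseteq> obs F - N" using lang_obs[OF assms(1) s] by (auto simp: shrink_def)
  then have reached: "reached ?D ?t = {reach_family F N ?t}"
    by (rule reached_shrink_device[OF assms(1)])
  let ?K = "consensus F (reach_family F N ?t)"
  have "?K \<subseteq> outputs F s" using s by (auto simp: consensus_reach_family)
  moreover have "?K \<noteq> {}" using consensus_nonempty[OF s] by (simp add: consensus_reach_family)
  moreover note outputs_subset_outs[OF assms(1), of s]
  ultimately have "outputs ?D ?t \<subseteq> outputs F s"
    using reached by (auto simp: outputs_def shrink_device_def)
  with reached show "?t \<in> lang ?D \<and> outputs ?D ?t \<subseteq> outputs F s"
    by (simp add: lang_def)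
qed

lemma consensus_nonempty_of_pump_simulation:
  assumes F: "is_scd F" and F1: "is_scd F1"
    and sim: "output_simulates F1 F (pump (lang F) N)"
    and hd_notin: "\<forall>s\<in>lang F. s \<noteq> [] \<longrightarrow> hd s \<notin> N"
    and s: "s \<in> lang F"
  shows "(\<Inter>s'\<in>{s' \<in> lang F. shrink N s' = shrink N s}. outputs F s') \<noteq> {}"
proof -
  define S where "S = {s' \<in> lang F. shrink N s' = shrink N s}"
  have "reached F ` S \<subseteq> Pow (states F)" using reached_subset_states[OF F] by blast
  moreover have "finite (Pow (states F))" using F by (simp add: is_scd_def)
  ultimately have "finite (reached F ` S)" by (rule finite_subset)
  then have "\<exists>C\<subseteq>S. finite C \<and> reached F ` S = reached F ` C"
    by (rule finite_subset_image[OF _ order_refl])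
  then obtain C where C: "C \<subseteq> S" "finite C" "reached F ` S = reached F ` C"
    by (elim exE conjE)
  have "C \<subseteq> lang F" "\<forall>s'\<in>C. shrink N s' = shrink N s" using C(1) unfolding S_def by auto
  then obtain w where pump: "\<And>s'. s' \<in> C \<Longrightarrow> pump (lang F) N s' w"
    using ex_common_pump[OF C(2) _ _ hd_notin] by blast
  have w: "w \<in> lang F1 \<and> outputs F1 w \<subseteq> outputs F s'" if "s' \<in> C" for s'
  proof -
    have "s' \<in> lang F" using that C(1) unfolding S_def by blast
    with sim pump[OF that] show ?thesis unfolding output_simulates_def by blast
  qed
  have represented: "\<exists>s''\<in>C. outputs F s'' = outputs F s'" if "s' \<in> S" for s'
  proof -
    have "reached F s' \<in> reached F ` C" using imageI[OF that, of "reached F"] unfolding C(3) .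
    then obtain s'' where "s'' \<in> C" "reached F s'' = reached F s'" by (metis imageE)
    then show ?thesis unfolding outputs_def by metis
  qed
  obtain s0 where "s0 \<in> C" using represented[of s] s unfolding S_def by blast
  then have "outputs F1 w \<noteq> {}" using w outputs_nonempty[OF F1] by blast
  moreover have "outputs F1 w \<subseteq> (\<Inter>s'\<in>S. outputs F s')"
    using represented w by fastforce
  ultimately show ?thesis unfolding S_def by blast
qed

theorem lemma5:
  fixes F :: "('v, 'y, 'c) scd" and N :: "'y set" and F1 :: "('w, 'y, 'c) scd"
  assumes "is_scd F"
    and "N \<subseteq> obs F"
    and "\<forall>s\<in>lang F. s \<noteq> [] \<longrightarrow> hd s \<in> obs F - N"
    and "is_scd F1"
    and "output_simulates F1 F (pump (lang F) N)"
  shows "\<exists>F2 :: (nat, 'y, 'c) scd. is_scd F2 \<and> output_simulates F2 F (shrink_rel (lang F) N)"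
proof -
  have "\<forall>s\<in>lang F. s \<noteq> [] \<longrightarrow> hd s \<notin> N" using assms(3) by blast
  then have "output_simulates (shrink_device F N) F (shrink_rel (lang F) N)"
    using shrink_device_simulates[OF assms(1)] consensus_nonempty_of_pump_simulation[OF assms(1,4,5)] by blast
  then show ?thesis
    using output_simulates_nat_states is_scd_shrink_device assms(1) by blast
qed

end
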